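(* Let $u,v>0$ and $0<a,b\le 1$, and consider the map $(x,y)\mapsto\big((1-a)x+auy(1-y),\ (1-b)y+bvx(1-x)\big)$. Let $R_1=u^2v^2-4u^2v-4uv^2+18uv-27$. Provided $R_1\neq 0$: the map has three distinct positive equilibria if and only if $R_1>0$, and it has exactly one positive equilibrium if and only if $R_1<0$ and $uv>1$. Provided $R_1=0$: the map has two distinct positive equilibria if and only if $(u,v)\neq(3,3)$, and it has a unique positive equilibrium, namely $(2/3,2/3)$, if $(u,v)=(3,3)$.
   Context: An equilibrium of the map is a real fixed point $(x^*,y^* )$, i.e. a real solution of $x^*=uy^*(1-y^* )$, $y^*=vx^*(1-x^* )$; it is called positive if $x^*>0$ and $y^*>0$. *)

theory Defs
  imports Complex_Main
begin

definition cmap :: "real \<Rightarrow> real \<Rightarrow> real \<Rightarrow> real \<Rightarrow> real \<times> real \<Rightarrow> real \<times> real" where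
  "cmap a b u v p = (let x = fst p; y = snd p in
     ((1 - a) * x + a * u * y * (1 - y), (1 - b) * y + b * v * x * (1 - x)))"

definition pos_equilibria :: "real \<Rightarrow> real \<Rightarrow> real \<Rightarrow> real \<Rightarrow> (real \<times> real) set" where
  "pos_equilibria a b u v = {p. cmap a b u v p = p \<and> fst p > 0 \<and> snd p > 0}"

definition R1 :: "real \<Rightarrow> real \<Rightarrow> real" where
  "R1 u v = u^2 * v^2 - 4 * u^2 * v - 4 * u * v^2 + 18 * u * v - 27"

end

theory Submission
  imports Defs "HOL-Library.Quadratic_Discriminant" "HOL-Real_Asymp.Real_Asymp"
begin

text \<open>Since a, b \<noteq> 0, the equilibria are the fixed points of (x, y) \<mapsto> (u y (1 - y), v x (1 - x)).
  A positive one is determined by its second coordinate y \<in> (0, 1), a root of the cubic equation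
  u v (1 - y)(1 - u y (1 - y)) = 1. For u v > 1 every real root of this cubic lies in (0, 1), and for
  u v \<le> 1 none does (and then R1 u v < 0). So one counts the distinct real roots of a real cubic,
  which is governed by the sign of its discriminant, here u^4 v^2 R1 u v; a triple root occurs only
  for u = 3, which together with R1 u v = 0 forces v = 3. The discriminant rule itself follows by
  splitting off one real root r: the cubic is (y - r) q(y), and its discriminant is that of the
  quadratic q times q(r)^2.\<close>

definition cubic_discrim :: "real \<Rightarrow> real \<Rightarrow> real \<Rightarrow> real \<Rightarrow> real" where
  "cubic_discrim a b c d = b\<^sup>2 * c\<^sup>2 - 4 * a * c ^ 3 - 4 * b ^ 3 * d - 27 * a\<^sup>2 * d\<^sup>2 + 18 * a * b * c * d"

lemma cubic_has_real_root:
  fixes a b c d :: real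
  assumes "a \<noteq> 0"
  shows "\<exists>y. a * y ^ 3 + b * y\<^sup>2 + c * y + d = 0"
proof -
  have root_if_pos: "\<exists>y. a * y ^ 3 + b * y\<^sup>2 + c * y + d = 0" if "a > 0" for a b c d :: real
  proof -
    have "eventually (\<lambda>y. a * y ^ 3 + b * y\<^sup>2 + c * y + d > 0) at_top"
      using \<open>a > 0\<close> by real_asymp
    then obtain M where M: "\<And>y. y \<ge> M \<Longrightarrow> a * y ^ 3 + b * y\<^sup>2 + c * y + d > 0"
      by (auto simp: eventually_at_top_linorder)
    have "eventually (\<lambda>y. a * y ^ 3 + b * y\<^sup>2 + c * y + d < 0) at_bot"
      using \<open>a > 0\<close> by real_asymp
    then obtain N where N: "\<And>y. y \<le> N \<Longrightarrow> a * y ^ 3 + b * y\<^sup>2 + c * y + d < 0"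
      by (auto simp: eventually_at_bot_linorder)
    show ?thesis
      using IVT'[of "\<lambda>y. a * y ^ 3 + b * y\<^sup>2 + c * y + d" "min M N" 0 "max M N"]
        M[of "max M N"] N[of "min M N"]
      by (force intro: continuous_intros)
  qed
  show ?thesis
  proof (cases "a > 0")
    case False
    with assms obtain y where "(-a) * y ^ 3 + (-b) * y\<^sup>2 + (-c) * y + (-d) = 0"
      using root_if_pos[of "-a" "-b" "-c" "-d"] by auto
    then have "a * y ^ 3 + b * y\<^sup>2 + c * y + d = 0" by (simp add: algebra_simps)
    then show ?thesis ..
  qed (use root_if_pos in blast)
qed

lemma cubic_factor_root:
  fixes a b c d r y :: real
  assumes "a * r ^ 3 + b * r\<^sup>2 + c * r + d = 0"
  shows "a * y ^ 3 + b * y\<^sup>2 + c * y + d = (y - r) * (a * y\<^sup>2 + (a * r + b) * y + (a * r\<^sup>2 + b * r + c))"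
  using assms by algebra

lemma cubic_discrim_factor_root:
  fixes a b c d r :: real
  assumes "a * r ^ 3 + b * r\<^sup>2 + c * r + d = 0"
  shows "cubic_discrim a b c d = discrim a (a * r + b) (a * r\<^sup>2 + b * r + c) * (3 * a * r\<^sup>2 + 2 * b * r + c)\<^sup>2"
  using assms unfolding cubic_discrim_def discrim_def by algebra

lemma card_quadratic_roots:
  fixes a b c :: real
  assumes "a \<noteq> 0"
  shows "finite {x. a * x\<^sup>2 + b * x + c = 0}"
    and "card {x. a * x\<^sup>2 + b * x + c = 0} =
           (if discrim a b c > 0 then 2 else if discrim a b c = 0 then 1 else 0)"
proof -
  let ?D = "discrim a b c"
  let ?x1 = "(- b + sqrt ?D) / (2 * a)" and ?x2 = "(- b - sqrt ?D) / (2 * a)"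
  have "{x. a * x\<^sup>2 + b * x + c = 0} =
          (if ?D > 0 then {?x1, ?x2} else if ?D = 0 then {- b / (2 * a)} else {})"
    using discriminant_iff[OF assms] discriminant_zero[OF assms] discriminant_negative[OF assms]
    by auto
  moreover have "?D > 0 \<Longrightarrow> ?x1 \<noteq> ?x2"
    using assms by (simp add: divide_cancel_right)
  ultimately show "finite {x. a * x\<^sup>2 + b * x + c = 0}"
    and "card {x. a * x\<^sup>2 + b * x + c = 0} = (if ?D > 0 then 2 else if ?D = 0 then 1 else 0)"
    by auto
qed

lemma card_cubic_roots:
  fixes a b c d :: real
  assumes "a \<noteq> 0"
  defines "Z \<equiv> {y. a * y ^ 3 + b * y\<^sup>2 + c * y + d = 0}"
  shows "cubic_discrim a b c d > 0 \<Longrightarrow> card Z = 3"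
    and "cubic_discrim a b c d < 0 \<Longrightarrow> card Z = 1"
    and "cubic_discrim a b c d = 0 \<Longrightarrow> b\<^sup>2 \<noteq> 3 * a * c \<Longrightarrow> card Z = 2"
    and "cubic_discrim a b c d = 0 \<Longrightarrow> b\<^sup>2 = 3 * a * c \<Longrightarrow> Z = {- b / (3 * a)}"
proof -
  obtain r where r: "a * r ^ 3 + b * r\<^sup>2 + c * r + d = 0"
    using cubic_has_real_root[OF assms(1)] by blast
  define Q where "Q = {y. a * y\<^sup>2 + (a * r + b) * y + (a * r\<^sup>2 + b * r + c) = 0}"
  define D where "D = discrim a (a * r + b) (a * r\<^sup>2 + b * r + c)"
  define m where "m = 3 * a * r\<^sup>2 + 2 * b * r + c"
  have Z: "Z = insert r Q"
    unfolding Z_def Q_def cubic_factor_root[OF r] by auto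
  have disc: "cubic_discrim a b c d = D * m\<^sup>2"
    unfolding D_def m_def by (rule cubic_discrim_factor_root[OF r])
  have card_Q: "card Q = (if D > 0 then 2 else if D = 0 then 1 else 0)" and "finite Q"
    using card_quadratic_roots[OF assms(1)] unfolding Q_def D_def by blast+
  have r_in_Q: "r \<in> Q \<longleftrightarrow> m = 0"
    unfolding Q_def m_def by (auto simp: algebra_simps power2_eq_square)
  have card_Z: "card Z = (if m = 0 then card Q else card Q + 1)"
    unfolding Z using \<open>finite Q\<close> r_in_Q by (simp add: card_insert_if)
  have D_alt: "D = b\<^sup>2 - 3 * a * c - a * m"
    unfolding D_def m_def discrim_def by algebra
  have D_nonneg: "m = 0 \<Longrightarrow> D \<ge> 0"
    using card_Q r_in_Q \<open>finite Q\<close> by (cases "D \<ge> 0") (auto split: if_splits)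
  show "cubic_discrim a b c d > 0 \<Longrightarrow> card Z = 3"
    unfolding disc card_Z card_Q by (auto simp: zero_less_mult_iff)
  show "cubic_discrim a b c d < 0 \<Longrightarrow> card Z = 1"
    unfolding disc card_Z card_Q by (auto simp: mult_less_0_iff)
  show "cubic_discrim a b c d = 0 \<Longrightarrow> b\<^sup>2 \<noteq> 3 * a * c \<Longrightarrow> card Z = 2"
    unfolding disc card_Z card_Q using D_alt D_nonneg by force
  assume "cubic_discrim a b c d = 0" and "b\<^sup>2 = 3 * a * c"
  then have "m = 0" and "D = 0"
    using disc D_alt assms(1) by (auto simp: power2_eq_square)
  then have "(3 * a * r + b)\<^sup>2 = 0"
    unfolding D_def m_def discrim_def by algebra
  then have "r = - b / (3 * a)"
    using assms(1) by (simp add: field_simps)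
  moreover have "Q = {r}"
    using card_Q \<open>D = 0\<close> r_in_Q \<open>m = 0\<close> by (auto simp: card_1_singleton_iff)
  ultimately show "Z = {- b / (3 * a)}"
    unfolding Z by simp
qed

lemma cmap_fixed_point_iff:
  assumes "a \<noteq> 0" "b \<noteq> 0"
  shows "cmap a b u v (x, y) = (x, y) \<longleftrightarrow> x = u * y * (1 - y) \<and> y = v * x * (1 - x)"
proof -
  have "cmap a b u v (x, y) = (x, y) \<longleftrightarrow> a * (x - u * y * (1 - y)) = 0 \<and> b * (y - v * x * (1 - x)) = 0"
    unfolding cmap_def Let_def by (auto simp: algebra_simps)
  also have "\<dots> \<longleftrightarrow> x = u * y * (1 - y) \<and> y = v * x * (1 - x)"
    using assms by simp
  finally show ?thesis .
qed

lemma pos_equilibria_eq_image: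
  assumes "a \<noteq> 0" "b \<noteq> 0" "u > 0"
  shows "pos_equilibria a b u v =
           (\<lambda>y. (u * y * (1 - y), y)) ` {y. 0 < y \<and> y < 1 \<and> u * v * (1 - y) * (1 - u * y * (1 - y)) = 1}"
proof -
  have mem: "(x, y) \<in> pos_equilibria a b u v \<longleftrightarrow>
               x = u * y * (1 - y) \<and> 0 < y \<and> y < 1 \<and> u * v * (1 - y) * (1 - u * y * (1 - y)) = 1"
    for x y
  proof (cases "x = u * y * (1 - y) \<and> 0 < y")
    case True
    then have "0 < u * y"
      using \<open>u > 0\<close> by simp
    then have "0 < x \<longleftrightarrow> y < 1"
      using True mult_less_cancel_left_pos[OF \<open>0 < u * y\<close>, of 0 "1 - y"] by simp
    moreover have "v * x * (1 - x) = y * (u * v * (1 - y) * (1 - u * y * (1 - y)))"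
      using True by algebra
    ultimately show ?thesis
      using True by (simp add: pos_equilibria_def cmap_fixed_point_iff[OF assms(1,2)] mult_ac conj_commute)
  next
    case False
    then show ?thesis
      by (auto simp: pos_equilibria_def cmap_fixed_point_iff[OF assms(1,2)])
  qed
  show ?thesis
    by (auto simp: mem image_iff)
qed

lemma unit_interval_root_imp_gt_one:
  fixes u v y :: real
  assumes "u > 0" "v > 0" "0 < y" "y < 1" "u * v * (1 - y) * (1 - u * y * (1 - y)) = 1"
  shows "u * v > 1"
proof -
  define g where "g = (1 - y) * (1 - u * y * (1 - y))"
  have "0 < u * y * (1 - y)"
    using assms(1,3,4) by simp
  have "g < 1"
  proof (cases "1 - u * y * (1 - y) \<le> 0")
    case True
    then have "g \<le> 0"
      unfolding g_def using assms(4) by (simp add: mult_nonneg_nonpos)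
    then show ?thesis by simp
  next
    case False
    then have "g < 1 * 1"
      unfolding g_def using assms(3) \<open>0 < u * y * (1 - y)\<close> by (intro mult_strict_mono) simp_all
    then show ?thesis by simp
  qed
  then have "u * v * g < u * v * 1"
    using assms(1,2) by (intro mult_strict_left_mono) auto
  then show ?thesis
    using assms(5) unfolding g_def by (simp add: mult.assoc)
qed

lemma root_in_unit_interval:
  fixes u v y :: real
  assumes "u > 0" "v > 0" "u * v > 1" "u * v * (1 - y) * (1 - u * y * (1 - y)) = 1"
  shows "0 < y \<and> y < 1"
proof (rule ccontr)
  assume "\<not> (0 < y \<and> y < 1)"
  then have "u * y * (1 - y) \<le> 0"
    using assms(1) by (auto simp: mult_nonneg_nonpos mult_nonpos_nonneg mult_nonneg_nonneg)
  then have "1 - u * y * (1 - y) \<ge> 1" by linarith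
  consider "y \<le> 0" | "y \<ge> 1" using \<open>\<not> (0 < y \<and> y < 1)\<close> by linarith
  then show False
  proof cases
    case 1
    then have "(1 - y) * (1 - u * y * (1 - y)) \<ge> 1 * 1"
      using \<open>1 - u * y * (1 - y) \<ge> 1\<close> by (intro mult_mono) auto
    then have "u * v * ((1 - y) * (1 - u * y * (1 - y))) \<ge> u * v * 1"
      using assms(1,2) by (intro mult_left_mono) auto
    then show False using assms(3,4) by (simp add: mult.assoc)
  next
    case 2
    then have g: "(1 - y) * (1 - u * y * (1 - y)) \<le> 0"
      using \<open>1 - u * y * (1 - y) \<ge> 1\<close> by (intro mult_nonpos_nonneg) simp_all
    have "u * v * ((1 - y) * (1 - u * y * (1 - y))) \<le> 0"
      using mult_nonneg_nonpos[OF _ g, of "u * v"] assms(1,2) by simp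
    then show False using assms(4) by (simp add: mult.assoc)
  qed
qed

lemma unit_interval_roots_eq:
  fixes u v :: real
  assumes "u > 0" "v > 0"
  shows "{y. 0 < y \<and> y < 1 \<and> u * v * (1 - y) * (1 - u * y * (1 - y)) = 1} =
           (if u * v > 1 then {y. u * v * (1 - y) * (1 - u * y * (1 - y)) = 1} else {})"
  using unit_interval_root_imp_gt_one[OF assms] root_in_unit_interval[OF assms] by auto

lemma equilibrium_equation_as_cubic:
  fixes u v y :: real
  shows "u * v * (1 - y) * (1 - u * y * (1 - y)) = 1 \<longleftrightarrow>
           (- u\<^sup>2 * v) * y ^ 3 + (2 * u\<^sup>2 * v) * y\<^sup>2 + (- u * v * (u + 1)) * y + (u * v - 1) = 0"
proof -
  have "u * v * (1 - y) * (1 - u * y * (1 - y)) - 1 =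
          (- u\<^sup>2 * v) * y ^ 3 + (2 * u\<^sup>2 * v) * y\<^sup>2 + (- u * v * (u + 1)) * y + (u * v - 1)"
    by (simp add: algebra_simps power2_eq_square power3_eq_cube)
  then show ?thesis by (simp only: eq_iff_diff_eq_0[of _ 1])
qed

lemma cubic_discrim_equilibrium_equation:
  "cubic_discrim (- u\<^sup>2 * v) (2 * u\<^sup>2 * v) (- u * v * (u + 1)) (u * v - 1) = u ^ 4 * v\<^sup>2 * R1 u v"
  unfolding cubic_discrim_def R1_def by algebra

lemma R1_neg_if_product_le_one:
  fixes u v :: real
  assumes "u > 0" "v > 0" "u * v \<le> 1"
  shows "R1 u v < 0"
proof -
  have "R1 u v = (u * v)\<^sup>2 + 18 * (u * v) - 27 - 4 * (u * v) * (u + v)"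
    unfolding R1_def by algebra
  moreover have "(u * v)\<^sup>2 \<le> 1"
    using assms by (intro power_le_one) auto
  moreover have "4 * (u * v) * (u + v) > 0"
    using assms by simp
  ultimately show ?thesis
    using assms(3) by linarith
qed

lemma equilibrium_equation_roots:
  fixes u v :: real
  assumes "u > 0" "v > 0"
  defines "Z \<equiv> {y. u * v * (1 - y) * (1 - u * y * (1 - y)) = 1}"
  shows "R1 u v > 0 \<Longrightarrow> card Z = 3"
    and "R1 u v < 0 \<Longrightarrow> card Z = 1"
    and "R1 u v = 0 \<Longrightarrow> (u, v) \<noteq> (3, 3) \<Longrightarrow> card Z = 2"
    and "(u, v) = (3, 3) \<Longrightarrow> Z = {2 / 3}"
proof -
  have lead: "- u\<^sup>2 * v \<noteq> 0"
    using assms(1,2) by simp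
  have Z: "Z = {y. (- u\<^sup>2 * v) * y ^ 3 + (2 * u\<^sup>2 * v) * y\<^sup>2 + (- u * v * (u + 1)) * y + (u * v - 1) = 0}"
    unfolding Z_def equilibrium_equation_as_cubic ..
  note roots = card_cubic_roots[where b = "2 * u\<^sup>2 * v" and c = "- u * v * (u + 1)" and d = "u * v - 1",
      OF lead, folded Z, unfolded cubic_discrim_equilibrium_equation]
  have "u ^ 4 * v\<^sup>2 > 0"
    using assms(1,2) by simp
  then have sign: "u ^ 4 * v\<^sup>2 * R1 u v > 0 \<longleftrightarrow> R1 u v > 0" "u ^ 4 * v\<^sup>2 * R1 u v < 0 \<longleftrightarrow> R1 u v < 0"
    by (simp_all add: zero_less_mult_iff mult_less_0_iff)
  have triple: "(2 * u\<^sup>2 * v)\<^sup>2 = 3 * (- u\<^sup>2 * v) * (- u * v * (u + 1)) \<longleftrightarrow> u = 3"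
  proof -
    have "(2 * u\<^sup>2 * v)\<^sup>2 - 3 * (- u\<^sup>2 * v) * (- u * v * (u + 1)) = u ^ 3 * v\<^sup>2 * (u - 3)"
      by algebra
    then show ?thesis
      using assms(1,2) by (simp add: eq_iff_diff_eq_0[of "(2 * u\<^sup>2 * v)\<^sup>2"])
  qed
  have R1_at_3: "R1 3 v = - 3 * (v - 3)\<^sup>2"
    unfolding R1_def by algebra
  show "R1 u v > 0 \<Longrightarrow> card Z = 3" and "R1 u v < 0 \<Longrightarrow> card Z = 1"
    using roots(1,2) sign by auto
  show "R1 u v = 0 \<Longrightarrow> (u, v) \<noteq> (3, 3) \<Longrightarrow> card Z = 2"
    using roots(3) triple R1_at_3 by auto
  assume "(u, v) = (3, 3)"
  then show "Z = {2 / 3}"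
    using roots(4) triple by (simp add: R1_def)
qed

theorem theorem1:
  fixes u v a b :: real
  assumes "u > 0" "v > 0" "0 < a" "a \<le> 1" "0 < b" "b \<le> 1"
  shows "(R1 u v \<noteq> 0 \<longrightarrow>
            ((card (pos_equilibria a b u v) = 3 \<longleftrightarrow> R1 u v > 0) \<and>
             (card (pos_equilibria a b u v) = 1 \<longleftrightarrow> R1 u v < 0 \<and> u * v > 1))) \<and>
         (R1 u v = 0 \<longrightarrow>
            ((card (pos_equilibria a b u v) = 2 \<longleftrightarrow> (u, v) \<noteq> (3, 3)) \<and>
             ((u, v) = (3, 3) \<longrightarrow> pos_equilibria a b u v = {(2/3, 2/3)})))"
proof -
  define Z where "Z = {y. u * v * (1 - y) * (1 - u * y * (1 - y)) = 1}"
  have equilibria: "pos_equilibria a b u v = (\<lambda>y. (u * y * (1 - y), y)) ` (if u * v > 1 then Z else {})"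
    using pos_equilibria_eq_image[of a b u v] unit_interval_roots_eq[OF assms(1,2)] assms
    unfolding Z_def by simp
  show ?thesis
  proof (cases "u * v > 1")
    case False
    then show ?thesis
      using equilibria R1_neg_if_product_le_one[OF assms(1,2)] by simp
  next
    case True
    have "card (pos_equilibria a b u v) = card Z"
      unfolding equilibria using True by (simp add: card_image inj_on_def)
    then show ?thesis
      using equilibrium_equation_roots[OF assms(1,2), folded Z_def] equilibria True
      by (cases "R1 u v" "0 :: real" rule: linorder_cases) (auto simp: R1_def)
  qed
qed

end
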